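(* Let $[X,d,m]$ be a metric random walk space with invariant and reversible measure $\nu$ under the standing assumptions below, and let $\Omega\subset X$ be a bounded $\nu$-measurable set with $0<\nu(\Omega)<\nu(X)$. Suppose $u_n\in BV_m(X)$, $n\in\mathbb{N}$, are $m$-least gradient functions in $\Omega$ and $u_n\to u$ in $L^1(X,\nu)$, where $u\in BV_m(X)$. Then $u$ is an $m$-least gradient function in $\Omega$.
   Context: A metric random walk space $[X,d,m]$ is a Polish metric space $(X,d)$ with a family $m=(m_x)_{x\in X}$ of Borel probability measures such that $x\mapsto m_x(A)$ is Borel measurable for every Borel $A$ and each $m_x$ has finite first moment. $\nu$ is invariant: $\nu(A)=\int_X m_x(A)\,d\nu(x)$ for all $\nu$-measurable $A$; reversible: $dm_x(y)\,d\nu(x)=dm_y(x)\,d\nu(y)$. Standing assumptions: $(X,d,\nu)$ is $\sigma$-finite, $\nu(X)<\infty$, $\nu$ ergodic (every Borel $B$ with $m_x(B)=1$ for all $x\in B$ has $\nu(B)\in\{0,\nu(X)\}$). $BV_m(X)$ is the set of $\nu$-measurable $u:X\to\mathbb{R}$ with $\int_X\int_X|u(y)-u(x)|\,dm_x(y)\,d\nu(x)<\infty$, and $TV_m(u):=\frac12\int_X\int_X|u(y)-u(x)|\,dm_x(y)\,d\nu(x)$. A function $u\in BV_m(X)$ is an $m$-least gradient function in $\Omega$ if $TV_m(u)\le TV_m(u+g)$ for every $g\in BV_m(X)$ with $g=0$ $\nu$-a.e. on $X\setminus\Omega$. *)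

theory Defs
  imports "HOL-Probability.Probability"
begin

text \<open>A metric random walk space [X,d,m] with invariant, reversible, ergodic,
  finite measure nu. X is the whole (Polish) type, d = dist.\<close>

definition mrw_space :: "('a::polish_space \<Rightarrow> 'a measure) \<Rightarrow> bool" where
  "mrw_space m \<longleftrightarrow>
     (\<forall>x. prob_space (m x) \<and> sets (m x) = sets borel) \<and>
     (\<forall>A \<in> sets borel. (\<lambda>x. emeasure (m x) A) \<in> borel_measurable borel) \<and>
     (\<forall>x. integrable (m x) (\<lambda>y. dist x y))"

definition invariant_measure :: "('a::polish_space \<Rightarrow> 'a measure) \<Rightarrow> 'a measure \<Rightarrow> bool" where
  "invariant_measure m \<nu> \<longleftrightarrow>
     (\<forall>A \<in> sets \<nu>. emeasure \<nu> A = (\<integral>\<^sup>+ x. emeasure (m x) A \<partial>\<nu>))"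

text \<open>Reversibility dm_x(y) d nu(x) = dm_y(x) d nu(y), as equality of measures on X x X,
  tested on measurable rectangles A x B.\<close>
definition reversible_measure :: "('a::polish_space \<Rightarrow> 'a measure) \<Rightarrow> 'a measure \<Rightarrow> bool" where
  "reversible_measure m \<nu> \<longleftrightarrow>
     (\<forall>A \<in> sets borel. \<forall>B \<in> sets borel.
        (\<integral>\<^sup>+ x. indicator A x * emeasure (m x) B \<partial>\<nu>) =
        (\<integral>\<^sup>+ x. indicator B x * emeasure (m x) A \<partial>\<nu>))"

definition ergodic_measure :: "('a::polish_space \<Rightarrow> 'a measure) \<Rightarrow> 'a measure \<Rightarrow> bool" where
  "ergodic_measure m \<nu> \<longleftrightarrow>
     (\<forall>B \<in> sets borel. (\<forall>x \<in> B. emeasure (m x) B = 1) \<longrightarrow>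
        emeasure \<nu> B = 0 \<or> emeasure \<nu> B = emeasure \<nu> (space \<nu>))"

definition TV_integral :: "('a \<Rightarrow> 'a measure) \<Rightarrow> 'a measure \<Rightarrow> ('a \<Rightarrow> real) \<Rightarrow> ennreal" where
  "TV_integral m \<nu> u = (\<integral>\<^sup>+ x. (\<integral>\<^sup>+ y. ennreal \<bar>u y - u x\<bar> \<partial>(m x)) \<partial>\<nu>)"

definition BV_m :: "('a \<Rightarrow> 'a measure) \<Rightarrow> 'a measure \<Rightarrow> ('a \<Rightarrow> real) set" where
  "BV_m m \<nu> = {u. u \<in> borel_measurable \<nu> \<and> TV_integral m \<nu> u < \<infinity>}"

definition TV_m :: "('a \<Rightarrow> 'a measure) \<Rightarrow> 'a measure \<Rightarrow> ('a \<Rightarrow> real) \<Rightarrow> real" where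
  "TV_m m \<nu> u = enn2real (TV_integral m \<nu> u) / 2"

definition least_gradient :: "('a \<Rightarrow> 'a measure) \<Rightarrow> 'a measure \<Rightarrow> 'a set \<Rightarrow> ('a \<Rightarrow> real) \<Rightarrow> bool" where
  "least_gradient m \<nu> \<Omega> u \<longleftrightarrow> u \<in> BV_m m \<nu> \<and>
     (\<forall>g \<in> BV_m m \<nu>. (AE x in \<nu>. x \<notin> \<Omega> \<longrightarrow> g x = 0) \<longrightarrow>
        TV_m m \<nu> u \<le> TV_m m \<nu> (\<lambda>x. u x + g x))"

end

theory Submission
  imports Defs
begin

text \<open>By invariance of \<open>\<nu>\<close>, the total variation is a seminorm dominated by twice the
  \<open>L\<^sup>1\<close> norm: \<open>\<integral>\<integral>|f y - f x| dm\<^sub>x d\<nu> \<le> \<integral>\<integral>|f y| dm\<^sub>x d\<nu> + \<integral>|f| d\<nu> = 2\<parallel>f\<parallel>\<^sub>1\<close>.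
  For \<open>g\<close> vanishing off \<open>\<Omega>\<close> this gives
  \<open>TV(u) \<le> TV(u\<^sub>n) + 2\<parallel>u - u\<^sub>n\<parallel>\<^sub>1 \<le> TV(u\<^sub>n + g) + 2\<parallel>u - u\<^sub>n\<parallel>\<^sub>1 \<le> TV(u + g) + 4\<parallel>u - u\<^sub>n\<parallel>\<^sub>1\<close>,
  and letting \<open>n \<rightarrow> \<infinity>\<close> proves the claim.\<close>

lemma mrw_space_measurable_subprob_algebra:
  assumes "mrw_space m" and "sets M = sets (borel :: 'a::polish_space measure)"
  shows "m \<in> measurable M (subprob_algebra borel)"
proof (rule measurable_subprob_algebra)
  fix x
  show "subprob_space (m x)" and "sets (m x) = sets borel"
    using assms(1) by (auto simp: mrw_space_def prob_space_imp_subprob_space)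
next
  fix A :: "'a set"
  assume "A \<in> sets borel"
  then show "(\<lambda>x. emeasure (m x) A) \<in> borel_measurable M"
    using assms by (simp add: mrw_space_def measurable_cong_sets[OF assms(2) refl])
qed

lemma invariant_measure_bind_eq:
  assumes m: "mrw_space m" and sets_\<nu>: "sets \<nu> = sets (borel :: 'a::polish_space measure)"
    and "invariant_measure m \<nu>"
  shows "\<nu> \<bind> m = \<nu>"
proof -
  have ne: "space \<nu> \<noteq> {}"
    using sets_eq_imp_space_eq[OF sets_\<nu>] by simp
  have sets_bind: "sets (\<nu> \<bind> m) = sets borel"
    using sets_bind[of \<nu> m borel] ne m by (simp add: mrw_space_def)
  show ?thesis
  proof (rule measure_eqI)
    show "sets (\<nu> \<bind> m) = sets \<nu>"
      using sets_bind sets_\<nu> by simp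
  next
    fix A assume "A \<in> sets (\<nu> \<bind> m)"
    then show "emeasure (\<nu> \<bind> m) A = emeasure \<nu> A"
      using emeasure_bind[OF ne mrw_space_measurable_subprob_algebra[OF m sets_\<nu>]] assms
      by (simp add: sets_bind invariant_measure_def)
  qed
qed

lemma invariant_measure_nn_integral:
  assumes m: "mrw_space m" and sets_\<nu>: "sets \<nu> = sets (borel :: 'a::polish_space measure)"
    and inv: "invariant_measure m \<nu>" and f: "f \<in> borel_measurable (borel :: 'a measure)"
  shows "(\<integral>\<^sup>+x. \<integral>\<^sup>+y. f y \<partial>m x \<partial>\<nu>) = (\<integral>\<^sup>+x. f x \<partial>\<nu>)"
  using nn_integral_bind[OF f mrw_space_measurable_subprob_algebra[OF m sets_\<nu>]]
  by (simp add: invariant_measure_bind_eq[OF m sets_\<nu> inv])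

lemma borel_measurable_TV_integrand:
  assumes m: "mrw_space m" and sets_\<nu>: "sets \<nu> = sets (borel :: 'a::polish_space measure)"
    and v: "v \<in> borel_measurable (borel :: 'a measure)"
  shows "(\<lambda>x. \<integral>\<^sup>+y. ennreal \<bar>v y - v x\<bar> \<partial>m x) \<in> borel_measurable \<nu>"
proof -
  have "v \<in> borel_measurable \<nu>"
    using v by (simp add: measurable_cong_sets[OF sets_\<nu> refl])
  then have "(\<lambda>(x, y). ennreal \<bar>v y - v x\<bar>) \<in> borel_measurable (\<nu> \<Otimes>\<^sub>M borel)"
    using v by measurable
  then show ?thesis
    using nn_integral_measurable_subprob_algebra2[OF _ mrw_space_measurable_subprob_algebra[OF m sets_\<nu>]]
    by simp
qed

lemma TV_integral_add_le:
  assumes m: "mrw_space m" and sets_\<nu>: "sets \<nu> = sets (borel :: 'a::polish_space measure)"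
    and v: "v \<in> borel_measurable (borel :: 'a measure)"
    and w: "w \<in> borel_measurable (borel :: 'a measure)"
  shows "TV_integral m \<nu> (\<lambda>x. v x + w x) \<le> TV_integral m \<nu> v + TV_integral m \<nu> w"
proof -
  have pointwise: "(\<integral>\<^sup>+y. ennreal \<bar>(v y + w y) - (v x + w x)\<bar> \<partial>m x)
      \<le> (\<integral>\<^sup>+y. ennreal \<bar>v y - v x\<bar> \<partial>m x) + (\<integral>\<^sup>+y. ennreal \<bar>w y - w x\<bar> \<partial>m x)" for x
  proof -
    have sets_m: "sets (m x) = sets borel"
      using m by (simp add: mrw_space_def)
    have "v \<in> borel_measurable (m x)" "w \<in> borel_measurable (m x)"
      using v w by (simp_all add: measurable_cong_sets[OF sets_m refl])
    have "(\<integral>\<^sup>+y. ennreal \<bar>(v y + w y) - (v x + w x)\<bar> \<partial>m x)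
        \<le> (\<integral>\<^sup>+y. ennreal \<bar>v y - v x\<bar> + ennreal \<bar>w y - w x\<bar> \<partial>m x)"
      by (intro nn_integral_mono) (simp add: ennreal_plus[symmetric] del: ennreal_plus)
    also have "\<dots> = (\<integral>\<^sup>+y. ennreal \<bar>v y - v x\<bar> \<partial>m x) + (\<integral>\<^sup>+y. ennreal \<bar>w y - w x\<bar> \<partial>m x)"
      using \<open>v \<in> borel_measurable (m x)\<close> \<open>w \<in> borel_measurable (m x)\<close>
      by (intro nn_integral_add) auto
    finally show ?thesis .
  qed
  have "TV_integral m \<nu> (\<lambda>x. v x + w x)
      \<le> (\<integral>\<^sup>+x. (\<integral>\<^sup>+y. ennreal \<bar>v y - v x\<bar> \<partial>m x) + (\<integral>\<^sup>+y. ennreal \<bar>w y - w x\<bar> \<partial>m x) \<partial>\<nu>)"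
    unfolding TV_integral_def by (intro nn_integral_mono pointwise)
  also have "\<dots> = TV_integral m \<nu> v + TV_integral m \<nu> w"
    unfolding TV_integral_def
    using borel_measurable_TV_integrand[OF m sets_\<nu> v] borel_measurable_TV_integrand[OF m sets_\<nu> w]
    by (intro nn_integral_add) auto
  finally show ?thesis .
qed

lemma TV_integral_le_L1:
  assumes m: "mrw_space m" and sets_\<nu>: "sets \<nu> = sets (borel :: 'a::polish_space measure)"
    and inv: "invariant_measure m \<nu>" and f: "f \<in> borel_measurable (borel :: 'a measure)"
  shows "TV_integral m \<nu> f \<le> 2 * (\<integral>\<^sup>+x. ennreal \<bar>f x\<bar> \<partial>\<nu>)"
proof -
  have pointwise: "(\<integral>\<^sup>+y. ennreal \<bar>f y - f x\<bar> \<partial>m x) \<le> (\<integral>\<^sup>+y. ennreal \<bar>f y\<bar> \<partial>m x) + ennreal \<bar>f x\<bar>"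
    for x
  proof -
    have "prob_space (m x)" and sets_m: "sets (m x) = sets borel"
      using m by (simp_all add: mrw_space_def)
    have "f \<in> borel_measurable (m x)"
      using f by (simp add: measurable_cong_sets[OF sets_m refl])
    have "(\<integral>\<^sup>+y. ennreal \<bar>f y - f x\<bar> \<partial>m x) \<le> (\<integral>\<^sup>+y. ennreal \<bar>f y\<bar> + ennreal \<bar>f x\<bar> \<partial>m x)"
      by (intro nn_integral_mono) (simp add: ennreal_plus[symmetric] del: ennreal_plus)
    also have "\<dots> = (\<integral>\<^sup>+y. ennreal \<bar>f y\<bar> \<partial>m x) + (\<integral>\<^sup>+y. ennreal \<bar>f x\<bar> \<partial>m x)"
      using \<open>f \<in> borel_measurable (m x)\<close> by (intro nn_integral_add) auto
    also have "(\<integral>\<^sup>+y. ennreal \<bar>f x\<bar> \<partial>m x) = ennreal \<bar>f x\<bar>"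
      using prob_space.emeasure_space_1[OF \<open>prob_space (m x)\<close>] by simp
    finally show ?thesis .
  qed
  have "(\<lambda>x. \<integral>\<^sup>+y. ennreal \<bar>f y\<bar> \<partial>m x) \<in> borel_measurable \<nu>"
    using nn_integral_measurable_subprob_algebra2[OF _ mrw_space_measurable_subprob_algebra[OF m sets_\<nu>],
        of "\<lambda>x y. ennreal \<bar>f y\<bar>"] f
    by measurable
  moreover have "f \<in> borel_measurable \<nu>"
    using f by (simp add: measurable_cong_sets[OF sets_\<nu> refl])
  ultimately have "TV_integral m \<nu> f
      \<le> (\<integral>\<^sup>+x. \<integral>\<^sup>+y. ennreal \<bar>f y\<bar> \<partial>m x \<partial>\<nu>) + (\<integral>\<^sup>+x. ennreal \<bar>f x\<bar> \<partial>\<nu>)"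
    unfolding TV_integral_def
    by (subst nn_integral_add[symmetric]) (auto intro: nn_integral_mono pointwise)
  also have "(\<integral>\<^sup>+x. \<integral>\<^sup>+y. ennreal \<bar>f y\<bar> \<partial>m x \<partial>\<nu>) = (\<integral>\<^sup>+x. ennreal \<bar>f x\<bar> \<partial>\<nu>)"
    using f by (intro invariant_measure_nn_integral[OF m sets_\<nu> inv]) auto
  finally show ?thesis
    by (simp add: mult_2)
qed

lemma BV_m_borel_measurable:
  assumes "sets \<nu> = sets borel" and "u \<in> BV_m m \<nu>"
  shows "u \<in> borel_measurable borel"
  using assms by (simp add: BV_m_def measurable_cong_sets[OF assms(1) refl])

lemma BV_m_add:
  assumes m: "mrw_space m" and sets_\<nu>: "sets \<nu> = sets (borel :: 'a::polish_space measure)"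
    and v: "v \<in> BV_m m \<nu>" and w: "w \<in> BV_m m \<nu>"
  shows "(\<lambda>x. v x + w x) \<in> BV_m m \<nu>"
proof -
  have "TV_integral m \<nu> (\<lambda>x. v x + w x) \<le> TV_integral m \<nu> v + TV_integral m \<nu> w"
    using BV_m_borel_measurable[OF sets_\<nu>] v w by (intro TV_integral_add_le[OF m sets_\<nu>])
  also have "\<dots> < \<infinity>"
    using v w by (simp add: BV_m_def ennreal_add_less_top)
  finally show ?thesis
    using v w by (simp add: BV_m_def borel_measurable_add)
qed

lemma TV_m_le_iff:
  assumes "u \<in> BV_m m \<nu>" and "v \<in> BV_m m \<nu>"
  shows "TV_m m \<nu> u \<le> TV_m m \<nu> v \<longleftrightarrow> TV_integral m \<nu> u \<le> TV_integral m \<nu> v"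
  using assms enn2real_mono[of "TV_integral m \<nu> u" "TV_integral m \<nu> v"]
    ennreal_leI[of "enn2real (TV_integral m \<nu> u)" "enn2real (TV_integral m \<nu> v)"]
  by (auto simp: TV_m_def BV_m_def)

lemma TV_integral_le_of_least_gradient:
  assumes m: "mrw_space m" and sets_\<nu>: "sets \<nu> = sets (borel :: 'a::polish_space measure)"
    and inv: "invariant_measure m \<nu>" and w: "least_gradient m \<nu> \<Omega> w"
    and u: "u \<in> BV_m m \<nu>" and g: "g \<in> BV_m m \<nu>" and g_\<Omega>: "AE x in \<nu>. x \<notin> \<Omega> \<longrightarrow> g x = 0"
  shows "TV_integral m \<nu> u
    \<le> TV_integral m \<nu> (\<lambda>x. u x + g x) + 4 * (\<integral>\<^sup>+x. ennreal \<bar>w x - u x\<bar> \<partial>\<nu>)"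
proof -
  let ?TV = "TV_integral m \<nu>" and ?d = "\<integral>\<^sup>+x. ennreal \<bar>w x - u x\<bar> \<partial>\<nu>"
  have "w \<in> BV_m m \<nu>"
    using w by (simp add: least_gradient_def)
  have meas: "u \<in> borel_measurable borel" "w \<in> borel_measurable borel" "g \<in> borel_measurable borel"
    using BV_m_borel_measurable[OF sets_\<nu>] u g \<open>w \<in> BV_m m \<nu>\<close> by auto
  have "?TV u = ?TV (\<lambda>x. w x + (u x - w x))"
    by simp
  also have "\<dots> \<le> ?TV w + ?TV (\<lambda>x. u x - w x)"
    using meas by (intro TV_integral_add_le[OF m sets_\<nu>]) auto
  also have "?TV (\<lambda>x. u x - w x) \<le> 2 * ?d"
    using TV_integral_le_L1[OF m sets_\<nu> inv, of "\<lambda>x. u x - w x"] meas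
    by (simp add: abs_minus_commute)
  also have "?TV w \<le> ?TV (\<lambda>x. w x + g x)"
    using w g g_\<Omega> TV_m_le_iff[OF \<open>w \<in> BV_m m \<nu>\<close> BV_m_add[OF m sets_\<nu> \<open>w \<in> BV_m m \<nu>\<close> g]]
    by (simp add: least_gradient_def)
  also have "?TV (\<lambda>x. w x + g x) = ?TV (\<lambda>x. (u x + g x) + (w x - u x))"
    by (rule arg_cong[where f = ?TV]) auto
  also have "\<dots> \<le> ?TV (\<lambda>x. u x + g x) + ?TV (\<lambda>x. w x - u x)"
    using meas by (intro TV_integral_add_le[OF m sets_\<nu>]) auto
  also have "?TV (\<lambda>x. w x - u x) \<le> 2 * ?d"
    using meas by (intro TV_integral_le_L1[OF m sets_\<nu> inv]) auto
  finally show ?thesis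
    by (simp add: add.assoc distrib_right[symmetric])
qed

lemma least_gradient_L1_limit:
  assumes m: "mrw_space m" and sets_\<nu>: "sets \<nu> = sets (borel :: 'a::polish_space measure)"
    and inv: "invariant_measure m \<nu>" and un: "\<And>n. least_gradient m \<nu> \<Omega> (un n)"
    and lim: "(\<lambda>n. \<integral>\<^sup>+x. ennreal \<bar>un n x - u x\<bar> \<partial>\<nu>) \<longlonglongrightarrow> 0"
    and u: "u \<in> BV_m m \<nu>"
  shows "least_gradient m \<nu> \<Omega> u"
  unfolding least_gradient_def
proof (intro conjI ballI impI)
  fix g assume g: "g \<in> BV_m m \<nu>" and g_\<Omega>: "AE x in \<nu>. x \<notin> \<Omega> \<longrightarrow> g x = 0"
  let ?TV = "TV_integral m \<nu>"
  have "(\<lambda>n. ?TV (\<lambda>x. u x + g x) + 4 * (\<integral>\<^sup>+x. ennreal \<bar>un n x - u x\<bar> \<partial>\<nu>))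
      \<longlonglongrightarrow> ?TV (\<lambda>x. u x + g x)"
    using tendsto_add[OF tendsto_const ennreal_tendsto_cmult[OF _ lim, of 4]] by simp
  then have "?TV u \<le> ?TV (\<lambda>x. u x + g x)"
    by (rule tendsto_lowerbound)
      (use TV_integral_le_of_least_gradient[OF m sets_\<nu> inv un u g g_\<Omega>] in \<open>simp_all add: always_eventually\<close>)
  then show "TV_m m \<nu> u \<le> TV_m m \<nu> (\<lambda>x. u x + g x)"
    using TV_m_le_iff u BV_m_add[OF m sets_\<nu> u g] by blast
qed (fact u)

theorem mainTheorem2:
  fixes m :: "'a::polish_space \<Rightarrow> 'a measure"
    and \<nu> :: "'a measure"
    and \<Omega> :: "'a set"
    and un :: "nat \<Rightarrow> 'a \<Rightarrow> real"
    and u :: "'a \<Rightarrow> real"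
  assumes "mrw_space m"
    and "sets \<nu> = sets borel"
    and "finite_measure \<nu>"
    and "invariant_measure m \<nu>"
    and "reversible_measure m \<nu>"
    and "ergodic_measure m \<nu>"
    and "bounded \<Omega>" and "\<Omega> \<in> sets \<nu>"
    and "0 < emeasure \<nu> \<Omega>" and "emeasure \<nu> \<Omega> < emeasure \<nu> (space \<nu>)"
    and "\<And>n. least_gradient m \<nu> \<Omega> (un n)"
    and "\<And>n. integrable \<nu> (un n)"
    and "integrable \<nu> u"
    and "(\<lambda>n. \<integral>\<^sup>+ x. ennreal \<bar>un n x - u x\<bar> \<partial>\<nu>) \<longlonglongrightarrow> 0"
    and "u \<in> BV_m m \<nu>"
  shows "least_gradient m \<nu> \<Omega> u"
  using assms(1,2,4,11,14,15) by (rule least_gradient_L1_limit)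

end
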